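(* Consider $N\ge2$ agents $V=\{1,\dots,N\}$ with states evolving, with zero control input, according to $$\dot x_i(t)=\sum_{j\in\mathcal N_i}|a_{ij}(t)|\bigl(\operatorname{sgn}(a_{ij}(t))\,x_j(t)-x_i(t)\bigr),\qquad i\in V,$$ over a signed time-varying graph $\mathcal G_A(t)$ whose coefficients satisfy (A1)–(A3) below. Suppose $\mathcal G_A(t)$ is uniformly quasi strongly $\delta$-connected with constant $T>0$ such that, for every $t\ge t_0\ge0$, the condensation graph of $G_\delta[t,t+T)$ contains a fixed node set $S\subseteq V$ forming a strongly connected component, with a $\delta$-path in $G_\delta[t,t+T)$ from $S$ to every node of $R:=V\setminus S$. Let $h(t):=\max_{i\in R}|x_i(t)|$, $c(t):=\max_{i\in S}|x_i(t)|$, $N_s:=\operatorname{card}(S)$, and suppose that for almost all $t\ge t_0$ the inequalities $D^+h(t)\le M_0N_s(c(t)-h(t))$ and $D^+c(t)\le0$ hold. Let $s,k\in\mathbb{Z}_{\ge0}$ and $K:=kT$. Then for almost all $t\in[t_0+sK,\,t_0+(s+1)K]$, $$c(t)\le c(t_0+sK),\qquad h(t)\le h(t_0+sK)+c(t_0+sK).$$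
   Context: $\operatorname{sgn}$ is the sign function; $a_{ij}(t)$ is the signed influence of agent $j$ on agent $i$; $\mathcal N_i$ is the set of incoming neighbors of $i$; solutions are Carathéodory (absolutely continuous). $D^+h(t)=\limsup_{s\to0^+}\frac{h(t+s)-h(t)}{s}$ is the upper Dini derivative. Assumptions: (A1) each $a_{ij}(t)$ is piecewise continuous on every compact interval with discontinuity set of Lebesgue measure zero; (A2) $a_{ii}\equiv0$; (A3) there is $M_0>0$ with $\int_{t_1}^{t_2}|a_{ij}(s)|\,ds\le M_0(t_2-t_1)$ for all $t_1\le t_2$. Graph notions: for $\delta>0$, a $\delta$-arc from $j$ to $i$ on $[t_1,t_2)$ means $\int_{t_1}^{t_2}|a_{ij}(t)|\,dt\ge\delta(t_2-t_1)$; a $\delta$-path is a directed path of $\delta$-arcs; $G_\delta[t_1,t_2)$ is the digraph on $V$ of $\delta$-arcs on $[t_1,t_2)$; its condensation graph has the strongly connected components as nodes. Uniformly quasi strongly $\delta$-connected: there is $T>0$ such that for every $t\ge0$ the condensation graph of $G_\delta[t,t+T)$ has a root node with a $\delta$-path to every other node. *)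

theory Defs
  imports "HOL-Analysis.Analysis"
begin

definition abs_cont_on :: "real set \<Rightarrow> (real \<Rightarrow> real) \<Rightarrow> bool" where
  "abs_cont_on I f \<longleftrightarrow>
     (\<forall>\<epsilon>>0. \<exists>\<delta>>0. \<forall>(n::nat) (a::nat \<Rightarrow> real) b.
        (\<forall>k<n. a k \<le> b k \<and> a k \<in> I \<and> b k \<in> I) \<and>
        (\<forall>k<n. \<forall>l<n. k \<noteq> l \<longrightarrow> b k \<le> a l \<or> b l \<le> a k) \<and>
        (\<Sum>k<n. b k - a k) < \<delta>
        \<longrightarrow> (\<Sum>k<n. \<bar>f (b k) - f (a k)\<bar>) < \<epsilon>)"

definition dini_upper :: "(real \<Rightarrow> real) \<Rightarrow> real \<Rightarrow> ereal" where
  "dini_upper h t = Limsup (at_right 0) (\<lambda>s. ereal ((h (t + s) - h t) / s))"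

text \<open>Agents are V = {1..N}; a i j t is the signed influence of j on i.\<close>

definition A1 :: "nat \<Rightarrow> (nat \<Rightarrow> nat \<Rightarrow> real \<Rightarrow> real) \<Rightarrow> bool" where
  "A1 N a \<longleftrightarrow> (\<forall>i\<in>{1..N}. \<forall>j\<in>{1..N}. \<forall>t1 t2.
      negligible {t \<in> {t1..t2}. \<not> isCont (a i j) t})"

definition A2 :: "nat \<Rightarrow> (nat \<Rightarrow> nat \<Rightarrow> real \<Rightarrow> real) \<Rightarrow> bool" where
  "A2 N a \<longleftrightarrow> (\<forall>i\<in>{1..N}. \<forall>t. a i i t = 0)"

definition A3 :: "nat \<Rightarrow> (nat \<Rightarrow> nat \<Rightarrow> real \<Rightarrow> real) \<Rightarrow> real \<Rightarrow> bool" where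
  "A3 N a M0 \<longleftrightarrow> M0 > 0 \<and> (\<forall>i\<in>{1..N}. \<forall>j\<in>{1..N}. \<forall>t1 t2. t1 \<le> t2 \<longrightarrow>
      (\<lambda>s. \<bar>a i j s\<bar>) integrable_on {t1..t2} \<and>
      integral {t1..t2} (\<lambda>s. \<bar>a i j s\<bar>) \<le> M0 * (t2 - t1))"

text \<open>Right-hand side of the closed-loop dynamics (zero control input). The sum over
  the in-neighbours N_i equals the sum over V, since terms with a i j t = 0 vanish.\<close>
definition rhs :: "nat \<Rightarrow> (nat \<Rightarrow> nat \<Rightarrow> real \<Rightarrow> real) \<Rightarrow> (nat \<Rightarrow> real \<Rightarrow> real) \<Rightarrow> nat \<Rightarrow> real \<Rightarrow> real" where
  "rhs N a x i t = (\<Sum>j\<in>{1..N}. \<bar>a i j t\<bar> * (sgn (a i j t) * x j t - x i t))"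

definition caratheodory_solution ::
  "nat \<Rightarrow> (nat \<Rightarrow> nat \<Rightarrow> real \<Rightarrow> real) \<Rightarrow> (nat \<Rightarrow> real \<Rightarrow> real) \<Rightarrow> bool" where
  "caratheodory_solution N a x \<longleftrightarrow>
     (\<forall>i\<in>{1..N}. (\<forall>t1 t2. 0 \<le> t1 \<longrightarrow> abs_cont_on {t1..t2} (x i)) \<and>
        (AE t in lborel. 0 \<le> t \<longrightarrow> (x i has_real_derivative rhs N a x i t) (at t)))"

definition delta_arc :: "(nat \<Rightarrow> nat \<Rightarrow> real \<Rightarrow> real) \<Rightarrow> real \<Rightarrow> real \<Rightarrow> real \<Rightarrow> nat \<Rightarrow> nat \<Rightarrow> bool" where
  "delta_arc a \<delta> t1 t2 j i \<longleftrightarrow> integral {t1..t2} (\<lambda>t. \<bar>a i j t\<bar>) \<ge> \<delta> * (t2 - t1)"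

text \<open>Arc relation of G_delta[t1,t2) on V = {1..N} (pairs (j,i) = arc j \<rightarrow> i).\<close>
definition G_delta :: "nat \<Rightarrow> (nat \<Rightarrow> nat \<Rightarrow> real \<Rightarrow> real) \<Rightarrow> real \<Rightarrow> real \<Rightarrow> real \<Rightarrow> (nat \<times> nat) set" where
  "G_delta N a \<delta> t1 t2 = {(j, i). j \<in> {1..N} \<and> i \<in> {1..N} \<and> delta_arc a \<delta> t1 t2 j i}"

definition delta_path :: "nat \<Rightarrow> (nat \<Rightarrow> nat \<Rightarrow> real \<Rightarrow> real) \<Rightarrow> real \<Rightarrow> real \<Rightarrow> real \<Rightarrow> nat \<Rightarrow> nat \<Rightarrow> bool" where
  "delta_path N a \<delta> t1 t2 u v \<longleftrightarrow> (u, v) \<in> (G_delta N a \<delta> t1 t2)\<^sup>*"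

text \<open>C is a strongly connected component of G_delta[t1,t2) (a node of its condensation graph).\<close>
definition is_scc :: "nat \<Rightarrow> (nat \<Rightarrow> nat \<Rightarrow> real \<Rightarrow> real) \<Rightarrow> real \<Rightarrow> real \<Rightarrow> real \<Rightarrow> nat set \<Rightarrow> bool" where
  "is_scc N a \<delta> t1 t2 C \<longleftrightarrow> C \<noteq> {} \<and> C \<subseteq> {1..N} \<and>
     (\<forall>u\<in>C. \<forall>v\<in>C. delta_path N a \<delta> t1 t2 u v) \<and>
     (\<forall>u\<in>C. \<forall>v\<in>{1..N}. delta_path N a \<delta> t1 t2 u v \<and> delta_path N a \<delta> t1 t2 v u \<longrightarrow> v \<in> C)"

text \<open>Uniformly quasi strongly delta-connected with constant T: for every t \<ge> 0 the
  condensation graph of G_delta[t,t+T) has a root node (an SCC) with a delta-path to every node.\<close>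
definition uqs_delta_connected :: "nat \<Rightarrow> (nat \<Rightarrow> nat \<Rightarrow> real \<Rightarrow> real) \<Rightarrow> real \<Rightarrow> real \<Rightarrow> bool" where
  "uqs_delta_connected N a \<delta> T \<longleftrightarrow> T > 0 \<and>
     (\<forall>t\<ge>0. \<exists>C. is_scc N a \<delta> t (t + T) C \<and>
        (\<forall>v\<in>{1..N}. \<exists>u\<in>C. delta_path N a \<delta> t (t + T) u v))"

end

theory Submission
  imports Defs
begin

(* The maxima c and h of |x_i| over S and over R are absolutely continuous, since their
   increments are dominated by the sum of the increments of the states. An absolutely continuous
   f with D^+f <= 0 outside a null set E is nonincreasing: if f a < f b, the tilted function
   g t = f t - eps t still has g a < g b; by Luzin's property (N) the set g(E) is null, so some
   level y in (g a, g b) is not attained on E, and at the last point where g = y one gets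
   D^+f >= eps, a contradiction. This gives c t <= c t_s. Wherever h >= c t_s >= c, the bound
   on D^+h is nonpositive, so max(h, c t_s) is nonincreasing as well, and hence
   h t <= max(h t_s, c t_s) <= h t_s + c t_s. Both bounds hold for every t >= t_s. *)

section \<open>Absolutely continuous functions\<close>

definition nonoverlapping_intervals :: "real set \<Rightarrow> nat \<Rightarrow> (nat \<Rightarrow> real) \<Rightarrow> (nat \<Rightarrow> real) \<Rightarrow> bool" where
  "nonoverlapping_intervals J n l r \<longleftrightarrow> (\<forall>k<n. l k \<le> r k \<and> l k \<in> J \<and> r k \<in> J) \<and>
     (\<forall>k<n. \<forall>k'<n. k \<noteq> k' \<longrightarrow> r k \<le> l k' \<or> r k' \<le> l k)"

lemma abs_cont_on_iff:
  "abs_cont_on J f \<longleftrightarrow> (\<forall>e>0. \<exists>d>0. \<forall>n l r. nonoverlapping_intervals J n l r \<and> (\<Sum>k<n. r k - l k) < d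
      \<longrightarrow> (\<Sum>k<n. \<bar>f (r k) - f (l k)\<bar>) < e)"
  unfolding abs_cont_on_def nonoverlapping_intervals_def by (simp only: conj_assoc)

lemma abs_cont_onD:
  assumes "abs_cont_on J f" "e > 0"
  obtains d where "d > 0" "\<And>n l r. nonoverlapping_intervals J n l r \<Longrightarrow> (\<Sum>k<n. r k - l k) < d \<Longrightarrow>
      (\<Sum>k<n. \<bar>f (r k) - f (l k)\<bar>) < e"
  using assms unfolding abs_cont_on_iff by meson

lemma abs_cont_on_subset:
  assumes "abs_cont_on J f" "J' \<subseteq> J"
  shows "abs_cont_on J' f"
  unfolding abs_cont_on_iff
proof (intro allI impI)
  fix e :: real
  assume "e > 0"
  with assms(1) obtain d where "d > 0" and d: "\<And>n l r. nonoverlapping_intervals J n l r \<Longrightarrow>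
      (\<Sum>k<n. r k - l k) < d \<Longrightarrow> (\<Sum>k<n. \<bar>f (r k) - f (l k)\<bar>) < e"
    using abs_cont_onD by metis
  have "nonoverlapping_intervals J n l r" if "nonoverlapping_intervals J' n l r" for n l r
    using that assms(2) unfolding nonoverlapping_intervals_def by blast
  with d \<open>d > 0\<close> show "\<exists>d>0. \<forall>n l r. nonoverlapping_intervals J' n l r \<and> (\<Sum>k<n. r k - l k) < d
      \<longrightarrow> (\<Sum>k<n. \<bar>f (r k) - f (l k)\<bar>) < e"
    by blast
qed

lemma abs_cont_on_imp_continuous_on:
  assumes "abs_cont_on J f"
  shows "continuous_on J f"
  unfolding continuous_on_iff
proof (intro ballI allI impI)
  fix t e :: real
  assume t: "t \<in> J" and "e > 0"
  then obtain d where "d > 0" and d: "\<And>n l r. nonoverlapping_intervals J n l r \<Longrightarrow>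
      (\<Sum>k<n. r k - l k) < d \<Longrightarrow> (\<Sum>k<n. \<bar>f (r k) - f (l k)\<bar>) < e"
    using abs_cont_onD[OF assms] by metis
  have step: "\<bar>f v - f u\<bar> < e" if "u \<in> J" "v \<in> J" "u \<le> v" "v - u < d" for u v
    using d[of 1 "\<lambda>_. u" "\<lambda>_. v"] that by (simp add: nonoverlapping_intervals_def)
  have "dist (f t') (f t) < e" if "t' \<in> J" "dist t' t < d" for t'
    using step[of t t'] step[of t' t] that t by (cases "t \<le> t'") (auto simp: dist_real_def abs_minus_commute)
  with \<open>d > 0\<close> show "\<exists>d>0. \<forall>t'\<in>J. dist t' t < d \<longrightarrow> dist (f t') (f t) < e"
    by blast
qed

lemma abs_cont_on_dominated:
  assumes "finite I" and ac: "\<And>i. i \<in> I \<Longrightarrow> abs_cont_on J (f i)"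
    and dom: "\<And>u v. u \<in> J \<Longrightarrow> v \<in> J \<Longrightarrow> \<bar>g v - g u\<bar> \<le> (\<Sum>i\<in>I. \<bar>f i v - f i u\<bar>)"
  shows "abs_cont_on J g"
  unfolding abs_cont_on_iff
proof (intro allI impI)
  fix e :: real
  assume "e > 0"
  define e' where "e' = e / (real (card I) + 1)"
  have "e' > 0" using \<open>e > 0\<close> by (simp add: e'_def)
  have "\<forall>i\<in>I. \<exists>d>0. \<forall>n l r. nonoverlapping_intervals J n l r \<and> (\<Sum>k<n. r k - l k) < d
      \<longrightarrow> (\<Sum>k<n. \<bar>f i (r k) - f i (l k)\<bar>) < e'"
    using ac \<open>e' > 0\<close> unfolding abs_cont_on_iff by blast
  then obtain D where D: "\<forall>i\<in>I. D i > 0 \<and> (\<forall>n l r. nonoverlapping_intervals J n l r \<and>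
      (\<Sum>k<n. r k - l k) < D i \<longrightarrow> (\<Sum>k<n. \<bar>f i (r k) - f i (l k)\<bar>) < e')"
    by metis
  define d where "d = Min (insert 1 (D ` I))"
  have "d > 0" unfolding d_def using \<open>finite I\<close> D by (subst Min_gr_iff) auto
  have d_le: "d \<le> D i" if "i \<in> I" for i
    unfolding d_def using \<open>finite I\<close> that by (intro Min_le) auto
  have "(\<Sum>k<n. \<bar>g (r k) - g (l k)\<bar>) < e"
    if lr: "nonoverlapping_intervals J n l r" and len: "(\<Sum>k<n. r k - l k) < d" for n l r
  proof -
    have "(\<Sum>k<n. \<bar>g (r k) - g (l k)\<bar>) \<le> (\<Sum>k<n. \<Sum>i\<in>I. \<bar>f i (r k) - f i (l k)\<bar>)"
      using lr dom by (intro sum_mono) (auto simp: nonoverlapping_intervals_def)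
    also have "\<dots> = (\<Sum>i\<in>I. \<Sum>k<n. \<bar>f i (r k) - f i (l k)\<bar>)"
      by (rule sum.swap)
    also have "\<dots> \<le> (\<Sum>i\<in>I. e')"
      using D lr len d_le by (intro sum_mono less_imp_le) (meson less_le_trans)
    also have "\<dots> < e"
      using \<open>e > 0\<close> by (simp add: e'_def field_simps)
    finally show ?thesis .
  qed
  with \<open>d > 0\<close> show "\<exists>d>0. \<forall>n l r. nonoverlapping_intervals J n l r \<and> (\<Sum>k<n. r k - l k) < d
      \<longrightarrow> (\<Sum>k<n. \<bar>g (r k) - g (l k)\<bar>) < e"
    by blast
qed

lemma abs_cont_on_affine: "abs_cont_on J (\<lambda>t. c * t + c')"
  unfolding abs_cont_on_iff
proof (intro allI impI)
  fix e :: real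
  assume "e > 0"
  have "(\<Sum>k<n. \<bar>(c * r k + c') - (c * l k + c')\<bar>) < e"
    if lr: "nonoverlapping_intervals J n l r" and len: "(\<Sum>k<n. r k - l k) < e / (\<bar>c\<bar> + 1)" for n l r
  proof -
    have "(\<Sum>k<n. \<bar>(c * r k + c') - (c * l k + c')\<bar>) = \<bar>c\<bar> * (\<Sum>k<n. r k - l k)"
      using lr by (auto simp: sum_distrib_left abs_mult nonoverlapping_intervals_def
          simp flip: right_diff_distrib intro!: sum.cong)
    also have "\<dots> \<le> (\<bar>c\<bar> + 1) * (\<Sum>k<n. r k - l k)"
      using lr by (intro mult_right_mono sum_nonneg) (auto simp: nonoverlapping_intervals_def)
    also have "\<dots> < e"
      using len by (simp add: field_simps add_pos_nonneg)
    finally show ?thesis .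
  qed
  moreover have "e / (\<bar>c\<bar> + 1) > 0"
    using \<open>e > 0\<close> by simp
  ultimately show "\<exists>d>0. \<forall>n l r. nonoverlapping_intervals J n l r \<and> (\<Sum>k<n. r k - l k) < d
      \<longrightarrow> (\<Sum>k<n. \<bar>(c * r k + c') - (c * l k + c')\<bar>) < e"
    by blast
qed

lemma abs_cont_on_add:
  assumes "abs_cont_on J f" "abs_cont_on J g"
  shows "abs_cont_on J (\<lambda>t. f t + g t)"
  by (rule abs_cont_on_dominated[where I = UNIV and f = "\<lambda>b. if b then f else g"])
    (use assms in \<open>auto simp: UNIV_bool intro: order_trans[OF _ abs_triangle_ineq]\<close>)

lemma abs_cont_on_finite_family:
  assumes "abs_cont_on J f" "e > 0"
  shows "\<exists>d>0. \<forall>(D :: 'i set) l r. finite D \<longrightarrow> (\<forall>i\<in>D. l i \<le> r i \<and> l i \<in> J \<and> r i \<in> J) \<longrightarrow>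
       (\<forall>i\<in>D. \<forall>j\<in>D. i \<noteq> j \<longrightarrow> r i \<le> l j \<or> r j \<le> l i) \<longrightarrow>
       (\<Sum>i\<in>D. r i - l i) < d \<longrightarrow> (\<Sum>i\<in>D. \<bar>f (r i) - f (l i)\<bar>) < e"
proof -
  obtain d where "d > 0" and d: "\<And>n l r. nonoverlapping_intervals J n l r \<Longrightarrow>
      (\<Sum>k<n. r k - l k) < d \<Longrightarrow> (\<Sum>k<n. \<bar>f (r k) - f (l k)\<bar>) < e"
    using abs_cont_onD[OF assms] by metis
  have "(\<Sum>i\<in>D. \<bar>f (r i) - f (l i)\<bar>) < e"
    if "finite D" and lr: "\<forall>i\<in>D. l i \<le> r i \<and> l i \<in> J \<and> r i \<in> J"
      and sep: "\<forall>i\<in>D. \<forall>j\<in>D. i \<noteq> j \<longrightarrow> r i \<le> l j \<or> r j \<le> l i"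
      and len: "(\<Sum>i\<in>D. r i - l i) < d"
    for D :: "'i set" and l r
  proof -
    obtain n :: nat and \<phi> where \<phi>: "D = \<phi> ` {..<n}" "inj_on \<phi> {..<n}"
      using finite_imp_nat_seg_image_inj_on[OF \<open>finite D\<close>] by (metis lessThan_def)
    have reindex: "(\<Sum>k<n. F (\<phi> k)) = (\<Sum>i\<in>D. F i)" for F :: "'i \<Rightarrow> real"
      using sum.reindex[OF \<phi>(2), of F] \<phi>(1) by simp
    have "nonoverlapping_intervals J n (l \<circ> \<phi>) (r \<circ> \<phi>)"
      unfolding nonoverlapping_intervals_def using \<phi>(1) lr sep inj_on_contraD[OF \<phi>(2)] by simp
    then show ?thesis
      using d[of n "l \<circ> \<phi>" "r \<circ> \<phi>"] len
        reindex[of "\<lambda>i. r i - l i"] reindex[of "\<lambda>i. \<bar>f (r i) - f (l i)\<bar>"] by simp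
  qed
  with \<open>d > 0\<close> show ?thesis
    by blast
qed

lemma measure_continuous_image_interval:
  fixes g :: "real \<Rightarrow> real"
  assumes "a \<le> b" "continuous_on {a..b} g"
  obtains p q where "a \<le> p" "p \<le> q" "q \<le> b" "measure lebesgue (g ` {a..b}) = \<bar>g q - g p\<bar>"
proof -
  obtain u v where uv: "g ` {a..b} = {u..v}" "u \<le> v"
    using continuous_image_closed_interval[OF assms] by blast
  then have "u \<in> g ` {a..b}" "v \<in> g ` {a..b}"
    by auto
  then obtain p' q' where "p' \<in> {a..b}" "q' \<in> {a..b}" "u = g p'" "v = g q'"
    by blast
  with uv have "measure lebesgue (g ` {a..b}) = \<bar>g (max p' q') - g (min p' q')\<bar>"
    by (auto simp: max_def min_def)
  with \<open>p' \<in> {a..b}\<close> \<open>q' \<in> {a..b}\<close> show ?thesis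
    using that[of "min p' q'" "max p' q'"] by auto
qed

lemma abs_cont_on_image_measure_small:
  fixes g :: "real \<Rightarrow> real"
  assumes "abs_cont_on {a..b} g" "e > 0"
  shows "\<exists>d>0. \<forall>(D :: 'i set) l r. finite D \<longrightarrow> (\<forall>i\<in>D. a \<le> l i \<and> l i \<le> r i \<and> r i \<le> b) \<longrightarrow>
       (\<forall>i\<in>D. \<forall>j\<in>D. i \<noteq> j \<longrightarrow> r i \<le> l j \<or> r j \<le> l i) \<longrightarrow>
       (\<Sum>i\<in>D. r i - l i) < d \<longrightarrow> (\<Sum>i\<in>D. measure lebesgue (g ` {l i..r i})) < e"
proof -
  obtain d where "d > 0" and d: "\<forall>(D :: 'i set) l r. finite D \<longrightarrow>
      (\<forall>i\<in>D. l i \<le> r i \<and> l i \<in> {a..b} \<and> r i \<in> {a..b}) \<longrightarrow>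
      (\<forall>i\<in>D. \<forall>j\<in>D. i \<noteq> j \<longrightarrow> r i \<le> l j \<or> r j \<le> l i) \<longrightarrow>
      (\<Sum>i\<in>D. r i - l i) < d \<longrightarrow> (\<Sum>i\<in>D. \<bar>g (r i) - g (l i)\<bar>) < e"
    using abs_cont_on_finite_family[OF assms] by blast
  have cont: "continuous_on {a..b} g"
    using assms(1) by (rule abs_cont_on_imp_continuous_on)
  have "(\<Sum>i\<in>D. measure lebesgue (g ` {l i..r i})) < e"
    if "finite D" and lr: "\<forall>i\<in>D. a \<le> l i \<and> l i \<le> r i \<and> r i \<le> b"
      and sep: "\<forall>i\<in>D. \<forall>j\<in>D. i \<noteq> j \<longrightarrow> r i \<le> l j \<or> r j \<le> l i"
      and len: "(\<Sum>i\<in>D. r i - l i) < d"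
    for D :: "'i set" and l r
  proof -
    have "\<forall>i\<in>D. \<exists>p q. l i \<le> p \<and> p \<le> q \<and> q \<le> r i \<and> measure lebesgue (g ` {l i..r i}) = \<bar>g q - g p\<bar>"
    proof
      fix i assume "i \<in> D"
      then have "l i \<le> r i" "continuous_on {l i..r i} g"
        using lr by (auto intro!: continuous_on_subset[OF cont])
      then obtain p q where "l i \<le> p" "p \<le> q" "q \<le> r i" "measure lebesgue (g ` {l i..r i}) = \<bar>g q - g p\<bar>"
        by (rule measure_continuous_image_interval)
      then show "\<exists>p q. l i \<le> p \<and> p \<le> q \<and> q \<le> r i \<and> measure lebesgue (g ` {l i..r i}) = \<bar>g q - g p\<bar>"
        by blast
    qed
    then obtain p q where pq: "\<And>i. i \<in> D \<Longrightarrow>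
        l i \<le> p i \<and> p i \<le> q i \<and> q i \<le> r i \<and> measure lebesgue (g ` {l i..r i}) = \<bar>g (q i) - g (p i)\<bar>"
      by metis
    then have "(\<Sum>i\<in>D. measure lebesgue (g ` {l i..r i})) = (\<Sum>i\<in>D. \<bar>g (q i) - g (p i)\<bar>)"
      by (intro sum.cong) auto
    also have "\<dots> < e"
    proof (rule d[rule_format, OF \<open>finite D\<close>])
      fix i assume "i \<in> D"
      then show "p i \<le> q i \<and> p i \<in> {a..b} \<and> q i \<in> {a..b}"
        using pq lr by fastforce
    next
      fix i j assume "i \<in> D" "j \<in> D" "i \<noteq> j"
      then have "r i \<le> l j \<or> r j \<le> l i"
        using sep by blast
      then show "q i \<le> p j \<or> q j \<le> p i"
        using pq[OF \<open>i \<in> D\<close>] pq[OF \<open>j \<in> D\<close>] by linarith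
    next
      have "(\<Sum>i\<in>D. q i - p i) \<le> (\<Sum>i\<in>D. r i - l i)"
        using pq by (intro sum_mono) fastforce
      with len show "(\<Sum>i\<in>D. q i - p i) < d"
        by linarith
    qed
    finally show ?thesis .
  qed
  with \<open>d > 0\<close> show ?thesis
    by blast
qed

section \<open>Luzin's property (N)\<close>

lemma negligible_imp_small_open_superset:
  assumes "negligible E" "d > 0"
  obtains U where "open U" "E \<subseteq> U" "U \<in> lmeasurable" "measure lebesgue U < d"
proof -
  obtain U where U: "open U" "E \<subseteq> U" "U - E \<in> lmeasurable" "emeasure lebesgue (U - E) < ennreal d"
    using sets_lebesgue_outer_open[OF negligible_imp_sets[OF assms(1)] assms(2)] by blast
  have E: "E \<in> lmeasurable" "measure lebesgue E = 0"
    using assms(1) by (auto intro: negligible_imp_measurable negligible_imp_measure0)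
  have split: "U = (U - E) \<union> E"
    using U by blast
  have "U \<in> lmeasurable"
    using U(3) E(1) by (subst split) (rule fmeasurable.Un)
  moreover have "measure lebesgue U \<le> measure lebesgue (U - E) + measure lebesgue E"
    using U(3) E(1) by (subst split) (rule measure_Un_le, auto)
  moreover have "measure lebesgue (U - E) < d"
    using U(3,4) assms(2) by (simp add: emeasure_eq_measure2 ennreal_less_iff)
  ultimately show ?thesis
    using that U(1,2) E(2) by fastforce
qed

lemma components_of_open_subset_interval:
  fixes V :: "real set"
  assumes V: "open V" "V \<subseteq> {a<..<b}" and C: "C \<in> components V"
  shows "a \<le> Inf C" "Inf C < Sup C" "Sup C \<le> b" "{Inf C<..<Sup C} \<subseteq> C" "C \<subseteq> {Inf C..Sup C}"
proof -
  have "C \<noteq> {}" "C \<subseteq> V" "open C"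
    using C V(1) in_components_nonempty in_components_subset open_components by blast+
  have interval: "is_interval C"
    using in_components_connected[OF C] is_interval_connected_1 by blast
  have bdd: "bdd_below C" "bdd_above C"
    using \<open>C \<subseteq> V\<close> V(2) by (auto intro!: bdd_belowI[of _ a] bdd_aboveI[of _ b])
  obtain t where "t \<in> C"
    using \<open>C \<noteq> {}\<close> by blast
  then obtain r where "r > 0" "ball t r \<subseteq> C"
    using \<open>open C\<close> open_contains_ball by blast
  then have "t - r/2 \<in> C" "t + r/2 \<in> C"
    by (auto simp: dist_real_def intro!: subsetD[OF \<open>ball t r \<subseteq> C\<close>])
  then have "Inf C \<le> t - r/2" "t + r/2 \<le> Sup C"
    using bdd by (auto intro: cInf_lower cSup_upper)
  then show "Inf C < Sup C"
    using \<open>r > 0\<close> by linarith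
  show "a \<le> Inf C" "Sup C \<le> b"
    using \<open>C \<noteq> {}\<close> \<open>C \<subseteq> V\<close> V(2) by (auto intro!: cInf_greatest cSup_least)
  show "C \<subseteq> {Inf C..Sup C}"
    using bdd by (auto intro: cInf_lower cSup_upper)
  show "{Inf C<..<Sup C} \<subseteq> C"
  proof
    fix y assume y: "y \<in> {Inf C<..<Sup C}"
    then obtain c1 c2 where "c1 \<in> C" "c1 < y" "c2 \<in> C" "y < c2"
      using cInf_less_iff[OF \<open>C \<noteq> {}\<close> bdd(1)] less_cSup_iff[OF \<open>C \<noteq> {}\<close> bdd(2)] by auto
    with interval show "y \<in> C"
      unfolding is_interval_1 by (meson less_imp_le)
  qed
qed

lemma components_of_open_subset_interval_separated:
  fixes V :: "real set"
  assumes V: "open V" "V \<subseteq> {a<..<b}" and C: "C \<in> components V" "C' \<in> components V" "C \<noteq> C'"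
  shows "Sup C \<le> Inf C' \<or> Sup C' \<le> Inf C"
proof (rule ccontr)
  assume overlap: "\<not> (Sup C \<le> Inf C' \<or> Sup C' \<le> Inf C)"
  note comp = components_of_open_subset_interval[OF V]
  define m where "m = (max (Inf C) (Inf C') + min (Sup C) (Sup C')) / 2"
  have "m \<in> {Inf C<..<Sup C}" "m \<in> {Inf C'<..<Sup C'}"
    using overlap comp(2)[OF C(1)] comp(2)[OF C(2)] unfolding m_def by auto
  then have "m \<in> C \<inter> C'"
    using comp(4) C(1,2) by blast
  moreover have "C \<inter> C' = {}"
    using pairwise_disjoint_components C unfolding pairwise_def disjnt_def by blast
  ultimately show False
    by blast
qed

lemma sum_length_components_le_measure:
  fixes V :: "real set"
  assumes V: "open V" "V \<subseteq> {a<..<b}" and D: "finite D" "D \<subseteq> components V"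
  shows "(\<Sum>C\<in>D. Sup C - Inf C) \<le> measure lebesgue V"
proof -
  note comp = components_of_open_subset_interval[OF V]
  have "(\<Sum>C\<in>D. Sup C - Inf C) = (\<Sum>C\<in>D. measure lebesgue {Inf C<..<Sup C})"
    using comp(2) D(2) by (intro sum.cong) (auto simp: less_imp_le)
  also have "\<dots> = measure lebesgue (\<Union>C\<in>D. {Inf C<..<Sup C})"
  proof (rule measure_finite_Union[symmetric, OF D(1)])
    show "disjoint_family_on (\<lambda>C. {Inf C<..<Sup C}) D"
      unfolding disjoint_family_on_def
      using comp(4) D(2) pairwise_disjoint_components[of V]
      unfolding pairwise_def disjnt_def by blast
  qed (use comp(2) D(2) in \<open>auto simp: less_imp_le\<close>)
  also have "\<dots> \<le> measure lebesgue V"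
  proof (rule measure_mono_fmeasurable)
    show "(\<Union>C\<in>D. {Inf C<..<Sup C}) \<subseteq> V"
      using comp(4) D(2) in_components_subset by blast
    show "V \<in> lmeasurable"
      using V by (intro lmeasurable_open) (auto intro: bounded_subset[of "{a<..<b}"])
  qed (use D(1) in auto)
  finally show ?thesis .
qed

lemma image_subset_Union_components:
  fixes g :: "real \<Rightarrow> real"
  assumes "open U" "E \<subseteq> U" "E \<subseteq> {a..b}"
  shows "g ` E \<subseteq> {g a, g b} \<union> (\<Union>C\<in>components (U \<inter> {a<..<b}). g ` {Inf C..Sup C})"
proof
  fix y assume "y \<in> g ` E"
  then obtain t where t: "t \<in> E" "y = g t"
    by blast
  show "y \<in> {g a, g b} \<union> (\<Union>C\<in>components (U \<inter> {a<..<b}). g ` {Inf C..Sup C})"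
  proof (cases "t = a \<or> t = b")
    case False
    then have "t \<in> U \<inter> {a<..<b}"
      using t assms(2,3) by auto
    then obtain C where "C \<in> components (U \<inter> {a<..<b})" "t \<in> C"
      using Union_components[of "U \<inter> {a<..<b}"] by blast
    moreover have "open (U \<inter> {a<..<b})"
      using assms(1) by auto
    ultimately show ?thesis
      using components_of_open_subset_interval(5)[of "U \<inter> {a<..<b}" a b C] t(2) by blast
  qed (use t in auto)
qed

lemma measure_Union_image_components_le:
  fixes g :: "real \<Rightarrow> real"
  assumes cont: "continuous_on {a..b} g" and V: "open V" "V \<subseteq> {a<..<b}"
    and bound: "\<And>D. finite D \<Longrightarrow> D \<subseteq> components V \<Longrightarrow> (\<Sum>C\<in>D. measure lebesgue (g ` {Inf C..Sup C})) \<le> e"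
  shows "(\<Union>C\<in>components V. g ` {Inf C..Sup C}) \<in> lmeasurable \<and>
    measure lebesgue (\<Union>C\<in>components V. g ` {Inf C..Sup C}) \<le> e"
proof -
  note comp = components_of_open_subset_interval[OF V]
  define W where "W = (\<lambda>C. g ` {Inf C..Sup C}) ` components V"
  have "countable (components V)"
    using open_components[OF V(1)] pairwise_disjoint_components[of V]
    by (intro countable_disjoint_open_subsets) (auto simp: pairwise_def disjnt_def)
  then have "countable W"
    by (simp add: W_def)
  have W_lmeasurable: "X \<in> lmeasurable" if "X \<in> W" for X
  proof -
    obtain C where "C \<in> components V" "X = g ` {Inf C..Sup C}"
      using \<open>X \<in> W\<close> by (auto simp: W_def)
    moreover have "continuous_on {Inf C..Sup C} g"
      using comp(1,3)[OF \<open>C \<in> components V\<close>] by (auto intro: continuous_on_subset[OF cont])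
    ultimately show ?thesis
      by (auto intro: lmeasurable_compact compact_continuous_image)
  qed
  have W_bound: "measure lebesgue (\<Union>W') \<le> e" if W': "W' \<subseteq> W" "finite W'" for W'
  proof -
    obtain D where D: "D \<subseteq> components V" "finite D" "W' = (\<lambda>C. g ` {Inf C..Sup C}) ` D"
      using finite_subset_image[OF W'(2) W'(1)[unfolded W_def]] by blast
    have "measure lebesgue (\<Union>W') \<le> (\<Sum>C\<in>D. measure lebesgue (g ` {Inf C..Sup C}))"
      unfolding D(3) using W_lmeasurable D by (intro measure_UNION_le) (auto simp: W_def)
    with bound[OF D(2,1)] show ?thesis
      by simp
  qed
  show ?thesis
    using fmeasurable_Union_bound[OF \<open>countable W\<close> W_lmeasurable W_bound]
      measure_Union_bound[OF \<open>countable W\<close> W_lmeasurable W_bound] by (auto simp: W_def)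
qed

lemma abs_cont_on_image_components_small:
  fixes g :: "real \<Rightarrow> real"
  assumes ac: "abs_cont_on {a..b} g" and "e > 0"
  shows "\<exists>d>0. \<forall>V. open V \<longrightarrow> V \<subseteq> {a<..<b} \<longrightarrow> measure lebesgue V < d \<longrightarrow>
      (\<Union>C\<in>components V. g ` {Inf C..Sup C}) \<in> lmeasurable \<and>
      measure lebesgue (\<Union>C\<in>components V. g ` {Inf C..Sup C}) \<le> e"
proof -
  obtain d where "d > 0" and d: "\<forall>(D :: real set set) l r. finite D \<longrightarrow>
      (\<forall>i\<in>D. a \<le> l i \<and> l i \<le> r i \<and> r i \<le> b) \<longrightarrow>
      (\<forall>i\<in>D. \<forall>j\<in>D. i \<noteq> j \<longrightarrow> r i \<le> l j \<or> r j \<le> l i) \<longrightarrow>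
      (\<Sum>i\<in>D. r i - l i) < d \<longrightarrow> (\<Sum>i\<in>D. measure lebesgue (g ` {l i..r i})) < e"
    using abs_cont_on_image_measure_small[OF ac \<open>e > 0\<close>] by blast
  have "(\<Union>C\<in>components V. g ` {Inf C..Sup C}) \<in> lmeasurable \<and>
      measure lebesgue (\<Union>C\<in>components V. g ` {Inf C..Sup C}) \<le> e"
    if V: "open V" "V \<subseteq> {a<..<b}" "measure lebesgue V < d" for V
  proof (rule measure_Union_image_components_le[OF abs_cont_on_imp_continuous_on[OF ac] V(1,2)])
    fix D assume D: "finite D" "D \<subseteq> components V"
    have "(\<Sum>C\<in>D. measure lebesgue (g ` {Inf C..Sup C})) < e"
    proof (rule d[rule_format, OF D(1)])
      fix C assume "C \<in> D"
      with D(2) show "a \<le> Inf C \<and> Inf C \<le> Sup C \<and> Sup C \<le> b"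
        using components_of_open_subset_interval(1-3)[OF V(1,2)] by (meson less_imp_le subsetD)
    next
      fix C C' assume "C \<in> D" "C' \<in> D" "C \<noteq> C'"
      with D(2) show "Sup C \<le> Inf C' \<or> Sup C' \<le> Inf C"
        using components_of_open_subset_interval_separated[OF V(1,2)] by blast
    next
      show "(\<Sum>C\<in>D. Sup C - Inf C) < d"
        using sum_length_components_le_measure[OF V(1,2) D] V(3) by linarith
    qed
    then show "(\<Sum>C\<in>D. measure lebesgue (g ` {Inf C..Sup C})) \<le> e"
      by simp
  qed
  with \<open>d > 0\<close> show ?thesis
    by blast
qed

lemma abs_cont_on_negligible_image:
  fixes g :: "real \<Rightarrow> real"
  assumes ac: "abs_cont_on {a..b} g" and E: "negligible E" "E \<subseteq> {a..b}"
  shows "negligible (g ` E)"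
  unfolding negligible_outer_le
proof (intro allI impI)
  fix e :: real
  assume "e > 0"
  then obtain d where "d > 0" and d: "\<forall>V. open V \<longrightarrow> V \<subseteq> {a<..<b} \<longrightarrow> measure lebesgue V < d \<longrightarrow>
      (\<Union>C\<in>components V. g ` {Inf C..Sup C}) \<in> lmeasurable \<and>
      measure lebesgue (\<Union>C\<in>components V. g ` {Inf C..Sup C}) \<le> e"
    using abs_cont_on_image_components_small[OF ac] by blast
  obtain U where U: "open U" "E \<subseteq> U" "U \<in> lmeasurable" "measure lebesgue U < d"
    using negligible_imp_small_open_superset[OF E(1) \<open>d > 0\<close>] by blast
  define W where "W = (\<Union>C\<in>components (U \<inter> {a<..<b}). g ` {Inf C..Sup C})"
  have "measure lebesgue (U \<inter> {a<..<b}) \<le> measure lebesgue U"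
    using U(1,3) by (intro measure_mono_fmeasurable) auto
  with U(4) have "measure lebesgue (U \<inter> {a<..<b}) < d"
    by linarith
  then have "W \<in> lmeasurable" "measure lebesgue W \<le> e"
    using d[rule_format, OF open_Int[OF U(1) open_greaterThanLessThan]] unfolding W_def by auto
  have "g ` E \<subseteq> {g a, g b} \<union> W"
    unfolding W_def using image_subset_Union_components[OF U(1,2) E(2)] .
  moreover have "measure lebesgue ({g a, g b} \<union> W) = measure lebesgue W"
    by (rule measure_negligible_symdiff[OF \<open>W \<in> lmeasurable\<close>])
      (rule negligible_subset[of "{g a, g b}"], auto)
  moreover have "{g a, g b} \<union> W \<in> lmeasurable"
    by (rule fmeasurable.Un[OF lmeasurable_compact \<open>W \<in> lmeasurable\<close>]) simp
  ultimately show "\<exists>T. g ` E \<subseteq> T \<and> T \<in> lmeasurable \<and> measure lebesgue T \<le> e"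
    using \<open>measure lebesgue W \<le> e\<close> by metis
qed

section \<open>Monotonicity from the upper Dini derivative\<close>

lemma dini_upper_le_iff:
  "dini_upper f t \<le> ereal B \<longleftrightarrow> (\<forall>e>B. \<forall>\<^sub>F s in at_right 0. (f (t + s) - f t) / s < e)"
  unfolding dini_upper_def Limsup_le_iff
proof (intro iffI allI impI)
  fix e :: real
  assume "\<forall>y>ereal B. \<forall>\<^sub>F s in at_right 0. ereal ((f (t + s) - f t) / s) < y" and "B < e"
  then show "\<forall>\<^sub>F s in at_right 0. (f (t + s) - f t) / s < e"
    by (auto dest: spec[of _ "ereal e"])
next
  fix y :: ereal
  assume bound: "\<forall>e>B. \<forall>\<^sub>F s in at_right 0. (f (t + s) - f t) / s < e" and "ereal B < y"
  show "\<forall>\<^sub>F s in at_right 0. ereal ((f (t + s) - f t) / s) < y"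
    using \<open>ereal B < y\<close> bound by (cases y) auto
qed

lemma last_crossing:
  fixes g :: "real \<Rightarrow> real"
  assumes "a \<le> b" and cont: "continuous_on {a..b} g" and "g a \<le> y" "y < g b"
  obtains \<tau> where "a \<le> \<tau>" "\<tau> < b" "g \<tau> = y" "\<And>t. \<tau> < t \<Longrightarrow> t \<le> b \<Longrightarrow> y < g t"
proof -
  define A where "A = {t \<in> {a..b}. g t \<le> y}"
  have "closed A"
    unfolding A_def by (rule continuous_on_closed_Collect_le[OF cont continuous_on_const closed_atLeastAtMost])
  moreover have "a \<in> A" "bdd_above A"
    using \<open>a \<le> b\<close> \<open>g a \<le> y\<close> by (auto simp: A_def intro: bdd_aboveI[of _ b])
  ultimately have "Sup A \<in> A"
    using closed_contains_Sup by blast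
  have above: "y < g t" if "Sup A < t" "t \<le> b" for t
    using that cSup_upper[OF _ \<open>bdd_above A\<close>, of t] \<open>a \<in> A\<close> \<open>Sup A \<in> A\<close> by (force simp: A_def)
  have "g (Sup A) = y"
  proof (rule ccontr)
    assume "g (Sup A) \<noteq> y"
    with \<open>Sup A \<in> A\<close> have "g (Sup A) < y" "Sup A \<le> b"
      by (auto simp: A_def)
    moreover have "continuous_on {Sup A..b} g"
      using \<open>Sup A \<in> A\<close> by (auto simp: A_def intro: continuous_on_subset[OF cont])
    ultimately obtain t where "Sup A \<le> t" "t \<le> b" "g t = y"
      using IVT'[of g "Sup A" y b] \<open>y < g b\<close> by auto
    with \<open>g (Sup A) < y\<close> have "Sup A < t"
      by (cases "Sup A = t") auto
    with above \<open>t \<le> b\<close> \<open>g t = y\<close> show False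
      by fastforce
  qed
  moreover have "Sup A < b"
    using \<open>Sup A \<in> A\<close> \<open>y < g b\<close> calculation by (auto simp: A_def less_le)
  ultimately show ?thesis
    using that \<open>Sup A \<in> A\<close> above by (auto simp: A_def)
qed

lemma abs_cont_on_dini_nonpos_imp_le:
  fixes f :: "real \<Rightarrow> real"
  assumes "a \<le> b" and ac: "abs_cont_on {a..b} f" and "negligible E"
    and dini: "\<And>t. t \<in> {a..<b} \<Longrightarrow> t \<notin> E \<Longrightarrow> dini_upper f t \<le> 0"
  shows "f b \<le> f a"
proof (rule ccontr)
  assume "\<not> f b \<le> f a"
  then have "f a < f b" "a < b"
    using \<open>a \<le> b\<close> by (auto simp: le_less)
  define \<epsilon> where "\<epsilon> = (f b - f a) / (2 * (b - a))"
  have "\<epsilon> > 0"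
    using \<open>f a < f b\<close> \<open>a < b\<close> by (simp add: \<epsilon>_def)
  define g where "g t = f t + (- \<epsilon> * t + \<epsilon> * a)" for t
  have acg: "abs_cont_on {a..b} g"
    unfolding g_def by (intro abs_cont_on_add ac abs_cont_on_affine)
  have "\<epsilon> * (b - a) = (f b - f a) / 2"
    using \<open>a < b\<close> by (simp add: \<epsilon>_def field_simps)
  then have "g a < g b"
    using \<open>f a < f b\<close> by (simp add: g_def algebra_simps)
  have "negligible (g ` (E \<inter> {a..b}))"
    using \<open>negligible E\<close> by (intro abs_cont_on_negligible_image[OF acg]) (auto intro: negligible_subset)
  moreover have "\<not> negligible {g a<..<g b}"
    using \<open>g a < g b\<close> negligible_interval(2)[of "g a" "g b"] by simp
  ultimately obtain y where "g a < y" "y < g b" "y \<notin> g ` (E \<inter> {a..b})"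
    by (metis greaterThanLessThan_iff negligible_subset subsetI)
  then obtain \<tau> where \<tau>: "a \<le> \<tau>" "\<tau> < b" "g \<tau> = y" and above: "\<And>t. \<tau> < t \<Longrightarrow> t \<le> b \<Longrightarrow> y < g t"
    using last_crossing[OF \<open>a \<le> b\<close> abs_cont_on_imp_continuous_on[OF acg]] by (metis less_imp_le)
  then have "\<tau> \<notin> E"
    using \<open>y \<notin> g ` (E \<inter> {a..b})\<close> by auto
  then have "\<forall>\<^sub>F s in at_right 0. (f (\<tau> + s) - f \<tau>) / s < \<epsilon>"
    using dini[of \<tau>] \<tau> \<open>\<epsilon> > 0\<close> dini_upper_le_iff[of f \<tau> 0] by (simp add: zero_ereal_def)
  moreover have "\<forall>\<^sub>F s in at_right 0. \<epsilon> < (f (\<tau> + s) - f \<tau>) / s"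
    unfolding eventually_at_right_field
  proof (intro exI[of _ "b - \<tau>"] conjI allI impI)
    show "0 < b - \<tau>"
      using \<tau> by simp
    fix s :: real
    assume "0 < s" "s < b - \<tau>"
    then have "y < g (\<tau> + s)"
      using above by simp
    with \<tau>(3) have "\<epsilon> * s < f (\<tau> + s) - f \<tau>"
      by (simp add: g_def algebra_simps)
    with \<open>0 < s\<close> show "\<epsilon> < (f (\<tau> + s) - f \<tau>) / s"
      by (simp add: field_simps)
  qed
  ultimately have "\<forall>\<^sub>F s in at_right (0::real). False"
    by eventually_elim simp
  then show False
    by simp
qed

lemma eventually_max_const_at_right:
  fixes h :: "real \<Rightarrow> real"
  assumes cont: "continuous_on {a..b} h" and t: "t \<in> {a..<b}" and "h t < m"
  shows "\<forall>\<^sub>F s in at_right 0. max (h (t + s)) m = max (h t) m"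
proof -
  have "\<exists>\<delta>>0. \<forall>t'\<in>{a..b}. dist t' t < \<delta> \<longrightarrow> dist (h t') (h t) < m - h t"
    using cont t \<open>h t < m\<close> unfolding continuous_on_iff by auto
  then obtain \<delta> where "\<delta> > 0" and \<delta>: "\<forall>t'\<in>{a..b}. dist t' t < \<delta> \<longrightarrow> dist (h t') (h t) < m - h t"
    by blast
  show ?thesis
    unfolding eventually_at_right_field
  proof (intro exI[of _ "min \<delta> (b - t)"] conjI allI impI)
    show "0 < min \<delta> (b - t)"
      using \<open>\<delta> > 0\<close> t by simp
    fix s :: real
    assume "0 < s" "s < min \<delta> (b - t)"
    then have "dist (h (t + s)) (h t) < m - h t"
      using \<delta> t by (auto simp: dist_real_def)
    with \<open>h t < m\<close> show "max (h (t + s)) m = max (h t) m"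
      by (auto simp: dist_real_def)
  qed
qed

lemma dini_upper_max_const_nonpos:
  fixes h :: "real \<Rightarrow> real"
  assumes cont: "continuous_on {a..b} h" and t: "t \<in> {a..<b}"
    and dini: "m \<le> h t \<Longrightarrow> dini_upper h t \<le> 0"
  shows "dini_upper (\<lambda>t. max (h t) m) t \<le> 0"
  unfolding zero_ereal_def dini_upper_le_iff
proof (intro allI impI)
  fix e :: real
  assume "0 < e"
  show "\<forall>\<^sub>F s in at_right 0. (max (h (t + s)) m - max (h t) m) / s < e"
  proof (cases "m \<le> h t")
    case True
    have "\<forall>\<^sub>F s in at_right 0. (h (t + s) - h t) / s < e"
      using dini[OF True] \<open>0 < e\<close> unfolding zero_ereal_def dini_upper_le_iff by blast
    moreover have "\<forall>\<^sub>F s in at_right (0::real). 0 < s"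
      by (simp add: eventually_at_right_less)
    ultimately show ?thesis
    proof eventually_elim
      case (elim s)
      show ?case
      proof (cases "h (t + s) \<le> h t")
        case True
        with \<open>m \<le> h t\<close> have "(max (h (t + s)) m - max (h t) m) / s \<le> 0"
          using \<open>0 < s\<close> by (intro divide_nonpos_pos) auto
        with \<open>0 < e\<close> show ?thesis
          by linarith
      next
        case False
        with \<open>m \<le> h t\<close> have "(max (h (t + s)) m - max (h t) m) / s \<le> (h (t + s) - h t) / s"
          using \<open>0 < s\<close> by (intro divide_right_mono) auto
        with elim show ?thesis
          by linarith
      qed
    qed
  next
    case False
    with cont t have "\<forall>\<^sub>F s in at_right 0. max (h (t + s)) m = max (h t) m"
      by (intro eventually_max_const_at_right) auto
    then show ?thesis
      by eventually_elim (use \<open>0 < e\<close> in simp)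
  qed
qed

lemma abs_cont_on_dini_nonpos_above_imp_le_max:
  fixes h :: "real \<Rightarrow> real"
  assumes "a \<le> b" and ac: "abs_cont_on {a..b} h" and "negligible E"
    and dini: "\<And>t. t \<in> {a..<b} \<Longrightarrow> t \<notin> E \<Longrightarrow> m \<le> h t \<Longrightarrow> dini_upper h t \<le> 0"
  shows "h b \<le> max (h a) m"
proof -
  have "abs_cont_on {a..b} (\<lambda>t. max (h t) m)"
    by (rule abs_cont_on_dominated[where I = "{()}" and f = "\<lambda>_. h"]) (use ac in auto)
  moreover have "dini_upper (\<lambda>t. max (h t) m) t \<le> 0" if "t \<in> {a..<b}" "t \<notin> E" for t
    using abs_cont_on_imp_continuous_on[OF ac] that(1) dini[OF that]
    by (rule dini_upper_max_const_nonpos)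
  ultimately have "max (h b) m \<le> max (h a) m"
    by (rule abs_cont_on_dini_nonpos_imp_le[OF \<open>a \<le> b\<close> _ \<open>negligible E\<close>])
  then show ?thesis
    by simp
qed

lemma Max_abs_diff_le_sum:
  fixes x :: "'i \<Rightarrow> real \<Rightarrow> real"
  assumes "finite S"
  shows "\<bar>Max ((\<lambda>i. \<bar>x i v\<bar>) ` S) - Max ((\<lambda>i. \<bar>x i u\<bar>) ` S)\<bar> \<le> (\<Sum>i\<in>S. \<bar>x i v - x i u\<bar>)"
proof (cases "S = {}")
  case False
  have one_side: "Max ((\<lambda>i. \<bar>x i w\<bar>) ` S) \<le> Max ((\<lambda>i. \<bar>x i w'\<bar>) ` S) + (\<Sum>i\<in>S. \<bar>x i w - x i w'\<bar>)"
    for w w'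
  proof -
    have "Max ((\<lambda>i. \<bar>x i w\<bar>) ` S) \<in> (\<lambda>i. \<bar>x i w\<bar>) ` S"
      using assms False by (intro Max_in) auto
    then obtain j where "j \<in> S" "Max ((\<lambda>i. \<bar>x i w\<bar>) ` S) = \<bar>x j w\<bar>"
      by auto
    moreover have "\<bar>x j w'\<bar> \<le> Max ((\<lambda>i. \<bar>x i w'\<bar>) ` S)"
      using \<open>j \<in> S\<close> assms by (intro Max_ge) auto
    moreover have "\<bar>x j w - x j w'\<bar> \<le> (\<Sum>i\<in>S. \<bar>x i w - x i w'\<bar>)"
      using \<open>j \<in> S\<close> assms by (intro member_le_sum) auto
    ultimately show ?thesis
      by linarith
  qed
  have "(\<Sum>i\<in>S. \<bar>x i u - x i v\<bar>) = (\<Sum>i\<in>S. \<bar>x i v - x i u\<bar>)"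
    by (simp add: abs_minus_commute)
  then show ?thesis
    using one_side[of v u] one_side[of u v] by linarith
qed simp

lemma abs_cont_on_Max_abs:
  assumes "finite S" "\<And>i. i \<in> S \<Longrightarrow> abs_cont_on J (x i)"
  shows "abs_cont_on J (\<lambda>t. Max ((\<lambda>i. \<bar>x i t\<bar>) ` S))"
  using assms Max_abs_diff_le_sum[OF assms(1)] by (rule abs_cont_on_dominated)

lemma abs_cont_on_dini_comparison:
  fixes c h :: "real \<Rightarrow> real"
  assumes "a \<le> t" and ac: "abs_cont_on {a..t} c" "abs_cont_on {a..t} h"
    and "negligible Z" and "0 \<le> K"
    and dc: "\<And>\<tau>. \<tau> \<in> {a..<t} \<Longrightarrow> \<tau> \<notin> Z \<Longrightarrow> dini_upper c \<tau> \<le> 0"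
    and dh: "\<And>\<tau>. \<tau> \<in> {a..<t} \<Longrightarrow> \<tau> \<notin> Z \<Longrightarrow> dini_upper h \<tau> \<le> ereal (K * (c \<tau> - h \<tau>))"
  shows "c t \<le> c a \<and> h t \<le> max (h a) (c a)"
proof -
  have c_le: "c \<tau> \<le> c a" if "\<tau> \<in> {a..t}" for \<tau>
  proof -
    have "abs_cont_on {a..\<tau>} c"
      using ac(1) by (rule abs_cont_on_subset) (use that in auto)
    then show ?thesis
      using abs_cont_on_dini_nonpos_imp_le[of a \<tau> c Z] \<open>negligible Z\<close> dc that by auto
  qed
  have "h t \<le> max (h a) (c a)"
  proof (rule abs_cont_on_dini_nonpos_above_imp_le_max[OF \<open>a \<le> t\<close> ac(2) \<open>negligible Z\<close>])
    fix \<tau>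
    assume \<tau>: "\<tau> \<in> {a..<t}" "\<tau> \<notin> Z" "c a \<le> h \<tau>"
    then have "K * (c \<tau> - h \<tau>) \<le> 0"
      using c_le[of \<tau>] \<open>0 \<le> K\<close> by (simp add: mult_nonneg_nonpos)
    with dh[OF \<tau>(1,2)] show "dini_upper h \<tau> \<le> 0"
      by (auto simp: zero_ereal_def intro: order_trans)
  qed
  with c_le[of t] \<open>a \<le> t\<close> show ?thesis
    by simp
qed

lemma caratheodory_solution_abs_cont_on_Max_abs:
  assumes "caratheodory_solution N a x" "0 \<le> p" "I \<subseteq> {1..N}"
  shows "abs_cont_on {p..q} (\<lambda>t. Max ((\<lambda>i. \<bar>x i t\<bar>) ` I))"
  using assms by (intro abs_cont_on_Max_abs) (auto simp: caratheodory_solution_def intro: finite_subset)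

theorem lemma3:
  fixes N :: nat and a :: "nat \<Rightarrow> nat \<Rightarrow> real \<Rightarrow> real" and x :: "nat \<Rightarrow> real \<Rightarrow> real"
    and M0 \<delta> T t0 :: real and S :: "nat set" and s k :: nat
  assumes N2: "N \<ge> 2"
    and A1: "A1 N a" and A2: "A2 N a" and A3: "A3 N a M0"
    and sol: "caratheodory_solution N a x"
    and delta_pos: "\<delta> > 0"
    and uqs: "uqs_delta_connected N a \<delta> T"
    and t0: "t0 \<ge> 0"
    and Sscc: "\<forall>t\<ge>t0. is_scc N a \<delta> t (t + T) S \<and>
                 (\<forall>v\<in>{1..N} - S. \<exists>u\<in>S. delta_path N a \<delta> t (t + T) u v)"
    and dini_h: "AE t in lborel. t \<ge> t0 \<longrightarrow>
        dini_upper (\<lambda>\<tau>. Max ((\<lambda>i. \<bar>x i \<tau>\<bar>) ` ({1..N} - S))) t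
          \<le> ereal (M0 * real (card S) *
               (Max ((\<lambda>i. \<bar>x i t\<bar>) ` S) - Max ((\<lambda>i. \<bar>x i t\<bar>) ` ({1..N} - S))))"
    and dini_c: "AE t in lborel. t \<ge> t0 \<longrightarrow>
        dini_upper (\<lambda>\<tau>. Max ((\<lambda>i. \<bar>x i \<tau>\<bar>) ` S)) t \<le> 0"
  shows "AE t in lborel. t \<in> {t0 + real s * (real k * T) .. t0 + real (s + 1) * (real k * T)} \<longrightarrow>
           Max ((\<lambda>i. \<bar>x i t\<bar>) ` S) \<le> Max ((\<lambda>i. \<bar>x i (t0 + real s * (real k * T))\<bar>) ` S) \<and>
           Max ((\<lambda>i. \<bar>x i t\<bar>) ` ({1..N} - S))
             \<le> Max ((\<lambda>i. \<bar>x i (t0 + real s * (real k * T))\<bar>) ` ({1..N} - S))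
               + Max ((\<lambda>i. \<bar>x i (t0 + real s * (real k * T))\<bar>) ` S)"
proof -
  have "S \<noteq> {}" "S \<subseteq> {1..N}"
    using Sscc t0 unfolding is_scc_def by auto
  then have "finite S"
    using finite_subset by blast
  have "T > 0" "M0 > 0"
    using uqs A3 unfolding uqs_delta_connected_def A3_def by auto
  define R where "R = {1..N} - S"
  define c where "c = (\<lambda>\<tau>. Max ((\<lambda>i. \<bar>x i \<tau>\<bar>) ` S))"
  define h where "h = (\<lambda>\<tau>. Max ((\<lambda>i. \<bar>x i \<tau>\<bar>) ` R))"
  define ts where "ts = t0 + real s * (real k * T)"
  have "t0 \<le> ts"
    using \<open>T > 0\<close> by (simp add: ts_def)
  have ac: "abs_cont_on {ts..t} c" "abs_cont_on {ts..t} h" for t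
    unfolding c_def h_def R_def using sol t0 \<open>t0 \<le> ts\<close> \<open>S \<subseteq> {1..N}\<close>
    by (auto intro!: caratheodory_solution_abs_cont_on_Max_abs)
  obtain Z where "negligible Z" and Z: "\<And>\<tau>. \<tau> \<notin> Z \<Longrightarrow> t0 \<le> \<tau> \<Longrightarrow>
      dini_upper h \<tau> \<le> ereal (M0 * real (card S) * (c \<tau> - h \<tau>)) \<and> dini_upper c \<tau> \<le> 0"
    using AE_conjI[OF dini_h dini_c, THEN AE_completion]
    unfolding eventually_ae_filter_negligible c_def h_def R_def by blast
  have bounds: "c t \<le> c ts \<and> h t \<le> max (h ts) (c ts)" if "ts \<le> t" for t
    using abs_cont_on_dini_comparison[OF that ac \<open>negligible Z\<close>, of "M0 * real (card S)"]
      Z \<open>t0 \<le> ts\<close> \<open>M0 > 0\<close> by auto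
  have "0 \<le> c ts" "R \<noteq> {} \<Longrightarrow> 0 \<le> h ts"
    using \<open>S \<noteq> {}\<close> \<open>finite S\<close> by (auto simp: c_def h_def R_def Max_ge_iff)
  \<comment> \<open>If R is empty, h is the constant junk value Max {}.\<close>
  then have "h t \<le> h ts + c ts" if "ts \<le> t" for t
    using bounds[OF that] by (cases "R = {}") (auto simp: h_def)
  with bounds show ?thesis
    by (intro AE_I2 impI) (auto simp: c_def h_def R_def ts_def)
qed

end
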